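(* Define polynomials in one variable $m$ by \[{}^{\mathsf{NF}}\!P_0(m)=m,\qquad {}^{\mathsf{NF}}\!P_{n+1}(m)={}^{\mathsf{NF}}\!P_n(m+1)+{}^{\mathsf{NF}}\!Q_{n+1}(m),\] \[{}^{\mathsf{NF}}\!Q_0(m)=m,\qquad {}^{\mathsf{NF}}\!Q_{n+1}(m)=\sum_{k=0}^{n}{}^{\mathsf{NF}}\!P_k(m)\,{}^{\mathsf{NF}}\!Q_{n-k}(m).\] Then for every $n\ge 0$, the degrees of ${}^{\mathsf{NF}}\!P_n$ and of ${}^{\mathsf{NF}}\!Q_n$ are both equal to $n+1$.
   Context: ${}^{\mathsf{NF}}\!P_n(m)$ counts beta-normal forms of size $n$ (de Bruijn indices of size $0$, abstraction and application of size $1$) with at most $m$ distinct free indices, and ${}^{\mathsf{NF}}\!Q_n(m)$ counts neutral normal forms (those headed by an index) of size $n$ with at most $m$ distinct free indices; this interpretation is not needed for the claim. *)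

theory Defs
  imports "HOL-Computational_Algebra.Polynomial"
begin

function NFP :: "nat \<Rightarrow> int poly" and NFQ :: "nat \<Rightarrow> int poly" where
  "NFP 0 = [:0, 1:]"
| "NFP (Suc n) = pcompose (NFP n) [:1, 1:] + NFQ (Suc n)"
| "NFQ 0 = [:0, 1:]"
| "NFQ (Suc n) = (\<Sum>k\<le>n. NFP k * NFQ (n - k))"
  by pat_completeness auto
termination
  by (relation "measure (\<lambda>x. case x of Inl n \<Rightarrow> 2 * n + 1 | Inr n \<Rightarrow> 2 * n)") auto

end

theory Submission
  imports Defs
begin

text \<open>By strong induction, P_n and Q_n have degree n + 1 with positive leading coefficient.
Every summand P_k Q_(n-k) of Q_(n+1) then has degree n + 2 and positive leading
coefficient, so no cancellation occurs in the sum; and P_n(m+1) has degree only n + 1,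
so it does not affect the leading term of P_(n+1).\<close>

text \<open>Leading coefficients are written coeff p d, not lead_coeff p: the latter abbreviates
coeff p (degree p), which the simplifier mangles once it rewrites the degree.\<close>

lemma degree_sum_eq_if_lead_coeff_pos:
  fixes f :: "'b \<Rightarrow> 'a::linordered_idom poly"
  assumes "finite A" "A \<noteq> {}"
    and "\<And>k. k \<in> A \<Longrightarrow> degree (f k) = d \<and> coeff (f k) d > 0"
  shows "degree (\<Sum>k\<in>A. f k) = d \<and> coeff (\<Sum>k\<in>A. f k) d > 0"
proof -
  have "coeff (\<Sum>k\<in>A. f k) d = (\<Sum>k\<in>A. coeff (f k) d)"
    by (simp add: coeff_sum)
  also have "\<dots> > 0"
    using assms by (intro sum_pos) auto
  finally have pos: "coeff (\<Sum>k\<in>A. f k) d > 0" .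
  have "degree (\<Sum>k\<in>A. f k) \<le> d"
    using assms by (intro degree_sum_le) auto
  moreover have "d \<le> degree (\<Sum>k\<in>A. f k)"
    using pos by (intro le_degree) simp
  ultimately show ?thesis
    using pos by simp
qed

lemma degree_mult_eq_if_lead_coeff_pos:
  fixes p q :: "'a::linordered_idom poly"
  assumes "degree p = a" "coeff p a > 0" "degree q = b" "coeff q b > 0"
  shows "degree (p * q) = a + b \<and> coeff (p * q) (a + b) > 0"
proof -
  have "p \<noteq> 0" "q \<noteq> 0"
    using assms by auto
  then have "degree (p * q) = a + b"
    using assms by (simp add: degree_mult_eq)
  moreover have "coeff (p * q) (a + b) = coeff p a * coeff q b"
    using assms coeff_mult_degree_sum[of p q] by simp
  ultimately show ?thesis
    using assms by simp
qed

lemma NFQ_Suc_degree: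
  assumes "\<And>k. k \<le> n \<Longrightarrow> degree (NFP k) = k + 1 \<and> coeff (NFP k) (k + 1) > 0"
    and "\<And>k. k \<le> n \<Longrightarrow> degree (NFQ k) = k + 1 \<and> coeff (NFQ k) (k + 1) > 0"
  shows "degree (NFQ (Suc n)) = n + 2 \<and> coeff (NFQ (Suc n)) (n + 2) > 0"
  unfolding NFQ.simps
proof (rule degree_sum_eq_if_lead_coeff_pos)
  fix k
  assume "k \<in> {..n}"
  then have "k \<le> n"
    by simp
  then have P: "degree (NFP k) = k + 1" "coeff (NFP k) (k + 1) > 0"
    and Q: "degree (NFQ (n - k)) = n - k + 1" "coeff (NFQ (n - k)) (n - k + 1) > 0"
    using assms(1)[of k] assms(2)[of "n - k"] by auto
  have "degree (NFP k * NFQ (n - k)) = (k + 1) + (n - k + 1) \<and>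
      coeff (NFP k * NFQ (n - k)) ((k + 1) + (n - k + 1)) > 0"
    using P Q by (rule degree_mult_eq_if_lead_coeff_pos)
  moreover have "(k + 1) + (n - k + 1) = n + 2"
    using \<open>k \<le> n\<close> by simp
  ultimately show "degree (NFP k * NFQ (n - k)) = n + 2 \<and> coeff (NFP k * NFQ (n - k)) (n + 2) > 0"
    by simp
qed auto

lemma NFP_Suc_degree:
  assumes "degree (NFP n) = n + 1"
    and "degree (NFQ (Suc n)) = n + 2" "coeff (NFQ (Suc n)) (n + 2) > 0"
  shows "degree (NFP (Suc n)) = n + 2 \<and> coeff (NFP (Suc n)) (n + 2) > 0"
proof -
  have less: "degree (pcompose (NFP n) [:1, 1:]) < n + 2"
    using assms by (simp add: degree_pcompose)
  then have "coeff (pcompose (NFP n) [:1, 1:]) (n + 2) = 0"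
    by (simp add: coeff_eq_0)
  with less show ?thesis
    using assms by (simp add: degree_add_eq_right)
qed

lemma NFP_NFQ_degree_lead_coeff:
  "degree (NFP n) = n + 1 \<and> coeff (NFP n) (n + 1) > 0 \<and>
   degree (NFQ n) = n + 1 \<and> coeff (NFQ n) (n + 1) > 0"
proof (induction n rule: less_induct)
  case (less n)
  show ?case
  proof (cases n)
    case 0
    then show ?thesis by simp
  next
    case (Suc m)
    then have Q: "degree (NFQ (Suc m)) = m + 2 \<and> coeff (NFQ (Suc m)) (m + 2) > 0"
      using less.IH by (intro NFQ_Suc_degree) auto
    moreover have "degree (NFP m) = m + 1"
      using less.IH Suc by blast
    ultimately have "degree (NFP (Suc m)) = m + 2 \<and> coeff (NFP (Suc m)) (m + 2) > 0"
      by (intro NFP_Suc_degree) auto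
    with Q Suc show ?thesis by simp
  qed
qed

theorem lemma3:
  fixes n :: nat
  shows "degree (NFP n) = n + 1 \<and> degree (NFQ n) = n + 1"
  using NFP_NFQ_degree_lead_coeff by blast

end
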